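(* Let $n\ge 2$, let $w(A,B)\in\mathbb F_2=\langle A,B\rangle$ be any word and $m=(m_1,\dots,m_{n-1})$ any tuple of integers. Then $\operatorname{Ker}(\Theta_n^{w,m})\le FVP_n\cap FVK_n$.
   Context: For $n\ge 2$, the flat virtual braid group $FVB_n$ is the group with generators $\sigma_1,\dots,\sigma_{n-1},\rho_1,\dots,\rho_{n-1}$ and defining relations: $\sigma_i^2=1$, $\rho_i^2=1$ for $1\le i\le n-1$; $\sigma_i\sigma_{i+1}\sigma_i=\sigma_{i+1}\sigma_i\sigma_{i+1}$, $\rho_i\rho_{i+1}\rho_i=\rho_{i+1}\rho_i\rho_{i+1}$ and $\rho_i\rho_{i+1}\sigma_i=\sigma_{i+1}\rho_i\rho_{i+1}$ for $1\le i\le n-2$; $\sigma_i\sigma_j=\sigma_j\sigma_i$, $\rho_i\rho_j=\rho_j\rho_i$ and $\rho_i\sigma_j=\sigma_j\rho_i$ for $|i-j|\ge 2$. $\mathbb F_{2n}$ is the free group on $x_1,\dots,x_n,y_1,\dots,y_n$; automorphisms compose left to right, $(\varphi\psi)(f)=\psi(\varphi(f))$, and generators not mentioned in the description of an automorphism are fixed. For $w(A,B)\in\mathbb F_2=\langle A,B\rangle$ and $m\in\mathbb Z^{n-1}$, $\Theta_n^{w,m}\colon FVB_n\to\mathrm{Aut}(\mathbb F_{2n})$ is the homomorphism given by $\Theta_n^{w,m}(\sigma_i): x_i\mapsto x_{i+1}a_i,\ x_{i+1}\mapsto x_i a_i^{-1}$, where $a_i=y_{i+1}^{m_2+\dots+m_i}\,w(y_i,y_{i+1})\,y_i^{-(m_1+\dots+m_{i-1})}$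 (empty sums are $0$, so $a_1=w(y_1,y_2)$); $\Theta_n^{w,m}(\rho_i): x_i\mapsto x_{i+1}y_{i+1}^{m_i},\ x_{i+1}\mapsto x_iy_i^{-m_i},\ y_i\mapsto y_{i+1},\ y_{i+1}\mapsto y_i$. Let $S_n=\langle\sigma_1,\dots,\sigma_{n-1}\rangle\le FVB_n$ and $S_n'=\langle\rho_1,\dots,\rho_{n-1}\rangle\le FVB_n$ (each isomorphic to the symmetric group). $\pi_n\colon FVB_n\to S_n$ is the homomorphism with $\pi_n(\sigma_i)=\pi_n(\rho_i)=\sigma_i$, and $FVP_n=\operatorname{Ker}\pi_n$ (flat virtual pure braid group). $\nu_n\colon FVB_n\to S_n'$ is the homomorphism with $\nu_n(\sigma_i)=1$, $\nu_n(\rho_i)=\rho_i$, and $FVK_n=\operatorname{Ker}\nu_n$ (flat virtual kure braid group). *)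

theory Defs
  imports Main
begin

text \<open>Free groups are modelled by words of letters (generator, inverse-flag),
  with True meaning the inverse of the generator; elements of the free group
  are the freely reduced words.\<close>

type_synonym 'g letter = "'g \<times> bool"

definition inv_letter :: "'g letter \<Rightarrow> 'g letter" where
  "inv_letter l = (fst l, \<not> snd l)"

definition inv_word :: "'g letter list \<Rightarrow> 'g letter list" where
  "inv_word xs = rev (map inv_letter xs)"

definition red :: "'g letter list \<Rightarrow> 'g letter list" where
  "red xs = foldr (\<lambda>a acc. case acc of [] \<Rightarrow> [a]
                     | b # rest \<Rightarrow> (if b = inv_letter a then rest else a # acc)) xs []"

definition reduced :: "'g letter list \<Rightarrow> bool" where
  "reduced xs = (\<forall>i. Suc i < length xs \<longrightarrow> xs ! Suc i \<noteq> inv_letter (xs ! i))"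

definition gpow :: "'g \<Rightarrow> int \<Rightarrow> 'g letter list" where
  "gpow g k = (if k \<ge> 0 then replicate (nat k) (g, False) else replicate (nat (- k)) (g, True))"

definition apply_subst :: "('g \<Rightarrow> 'h letter list) \<Rightarrow> 'g letter list \<Rightarrow> 'h letter list" where
  "apply_subst \<phi> ws = red (concat (map (\<lambda>(g, b). if b then inv_word (\<phi> g) else \<phi> g) ws))"

datatype fgen = X nat | Y nat

datatype ab = A | B

datatype fvbgen = Sig nat | Rho nat

definition F2n :: "nat \<Rightarrow> fgen letter list set" where
  "F2n n = {f. reduced f \<and> (\<forall>l\<in>set f. \<exists>i. 1 \<le> i \<and> i \<le> n \<and> (fst l = X i \<or> fst l = Y i))}"

definition valid_gen :: "nat \<Rightarrow> fvbgen \<Rightarrow> bool" where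
  "valid_gen n s = (case s of Sig i \<Rightarrow> 1 \<le> i \<and> i \<le> n - 1 | Rho i \<Rightarrow> 1 \<le> i \<and> i \<le> n - 1)"

definition w_at :: "ab letter list \<Rightarrow> nat \<Rightarrow> fgen letter list" where
  "w_at w i = apply_subst (\<lambda>c. case c of A \<Rightarrow> [(Y i, False)] | B \<Rightarrow> [(Y (Suc i), False)]) w"

definition a_word :: "ab letter list \<Rightarrow> (nat \<Rightarrow> int) \<Rightarrow> nat \<Rightarrow> fgen letter list" where
  "a_word w m i = red (gpow (Y (Suc i)) (\<Sum>k\<in>{2..i}. m k) @ w_at w i
                       @ gpow (Y i) (- (\<Sum>k\<in>{1..<i}. m k)))"

definition theta_gen :: "ab letter list \<Rightarrow> (nat \<Rightarrow> int) \<Rightarrow> fvbgen \<Rightarrow> fgen \<Rightarrow> fgen letter list" where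
  "theta_gen w m s g = (case s of
      Sig i \<Rightarrow> (if g = X i then (X (Suc i), False) # a_word w m i
                else if g = X (Suc i) then (X i, False) # inv_word (a_word w m i)
                else [(g, False)])
    | Rho i \<Rightarrow> (if g = X i then (X (Suc i), False) # gpow (Y (Suc i)) (m i)
                else if g = X (Suc i) then (X i, False) # gpow (Y i) (- m i)
                else if g = Y i then [(Y (Suc i), False)]
                else if g = Y (Suc i) then [(Y i, False)]
                else [(g, False)]))"

text \<open>Theta applied to the element of FVB_n represented by the word s_1 ... s_k,
  evaluated at f; automorphisms compose left to right:
  Theta(s_1 s_2)(f) = Theta(s_2)(Theta(s_1)(f)).\<close>
definition Theta :: "ab letter list \<Rightarrow> (nat \<Rightarrow> int) \<Rightarrow> fvbgen list \<Rightarrow> fgen letter list \<Rightarrow> fgen letter list" where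
  "Theta w m ss f = foldl (\<lambda>h s. apply_subst (theta_gen w m s) h) f ss"

definition tr :: "nat \<Rightarrow> nat \<Rightarrow> nat" where
  "tr i = (\<lambda>k. if k = i then Suc i else if k = Suc i then i else k)"

definition gen_idx :: "fvbgen \<Rightarrow> nat" where
  "gen_idx s = (case s of Sig i \<Rightarrow> i | Rho i \<Rightarrow> i)"

definition pi_perm :: "fvbgen list \<Rightarrow> nat \<Rightarrow> nat" where
  "pi_perm ss = foldl (\<lambda>p s. p \<circ> tr (gen_idx s)) id ss"

text \<open>nu_n: sigma_i \<mapsto> 1, rho_i \<mapsto> rho_i, with S_n' identified with S_n via rho_i \<mapsto> (i i+1).\<close>
definition nu_perm :: "fvbgen list \<Rightarrow> nat \<Rightarrow> nat" where
  "nu_perm ss = foldl (\<lambda>p s. case s of Sig i \<Rightarrow> p | Rho i \<Rightarrow> p \<circ> tr i) id ss"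

end

theory Submission
  imports Defs
begin

text \<open>Every generator of \<open>FVB\<^sub>n\<close> sends each \<open>y\<^sub>k\<close> to a \<open>y\<close>-generator and each
  \<open>x\<^sub>k\<close> to an \<open>x\<close>-generator followed by a word in the \<open>y\<close>'s.  Hence
  \<open>\<Theta>(g)(y\<^sub>k) = y\<^sub>j\<close> and \<open>\<Theta>(g)(x\<^sub>k) \<in> x\<^sub>j' \<langle>y\<^sub>1,\<dots>,y\<^sub>n\<rangle>\<close>, where \<open>j\<close> and
  \<open>j'\<close> are the images of \<open>k\<close> under the inverses of \<open>\<nu>(g)\<close> and \<open>\<pi>(g)\<close>.
  If \<open>\<Theta>(g)\<close> is the identity, both inverse permutations fix every index.\<close>

definition y_word :: "fgen letter list \<Rightarrow> bool" where
  "y_word ws \<longleftrightarrow> (\<forall>l\<in>set ws. \<exists>j. fst l = Y j)"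

lemma y_word_append [simp]: "y_word (xs @ ys) \<longleftrightarrow> y_word xs \<and> y_word ys"
  by (auto simp: y_word_def)

lemma y_word_inv_word: "y_word xs \<Longrightarrow> y_word (inv_word xs)"
  by (auto simp: y_word_def inv_word_def inv_letter_def)

lemma y_word_gpow: "y_word (gpow (Y j) k)"
  by (auto simp: y_word_def gpow_def)

lemma red_Cons:
  "red (a # xs) = (case red xs of [] \<Rightarrow> [a]
     | b # rest \<Rightarrow> (if b = inv_letter a then rest else a # red xs))"
  unfolding red_def foldr.simps comp_apply by (rule refl)

lemma set_red_subset: "set (red xs) \<subseteq> set xs"
  by (induction xs) (auto simp: red_Cons split: list.splits if_splits, simp add: red_def)

lemma y_word_red: "y_word xs \<Longrightarrow> y_word (red xs)"
  using set_red_subset unfolding y_word_def by blast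

lemma red_Cons_X: "y_word ys \<Longrightarrow> red ((X j, b) # ys) = (X j, b) # red ys"
  using y_word_red[of ys]
  by (auto simp: red_Cons y_word_def inv_letter_def split: list.splits)

lemma y_word_apply_subst:
  assumes "\<And>g b. (g, b) \<in> set ws \<Longrightarrow> y_word (\<phi> g)"
  shows "y_word (apply_subst \<phi> ws)"
  unfolding apply_subst_def
  by (rule y_word_red) (use assms in \<open>fastforce simp: y_word_def inv_word_def inv_letter_def\<close>)

lemma y_word_w_at: "y_word (w_at w i)"
  unfolding w_at_def by (rule y_word_apply_subst) (auto simp: y_word_def split: ab.split)

lemma y_word_a_word: "y_word (a_word w m i)"
  unfolding a_word_def by (simp add: y_word_red y_word_gpow y_word_w_at)

definition rho_tr :: "fvbgen \<Rightarrow> nat \<Rightarrow> nat" where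
  "rho_tr s = (case s of Sig i \<Rightarrow> id | Rho i \<Rightarrow> tr i)"

lemma theta_gen_Y: "theta_gen w m s (Y k) = [(Y (rho_tr s k), False)]"
  by (auto simp: theta_gen_def rho_tr_def tr_def split: fvbgen.split)

lemma theta_gen_X:
  "\<exists>zs. y_word zs \<and> theta_gen w m s (X k) = (X (tr (gen_idx s) k), False) # zs"
  by (auto simp: theta_gen_def tr_def gen_idx_def y_word_a_word y_word_inv_word y_word_gpow
      split: fvbgen.split) (auto simp: y_word_def)

lemma apply_theta_gen_Y: "apply_subst (theta_gen w m s) [(Y k, False)] = [(Y (rho_tr s k), False)]"
  by (simp add: apply_subst_def theta_gen_Y red_def)

lemma apply_theta_gen_X_Cons:
  assumes "y_word ys"
  shows "\<exists>zs. y_word zs \<and>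
    apply_subst (theta_gen w m s) ((X k, False) # ys) = (X (tr (gen_idx s) k), False) # zs"
proof -
  obtain zs where zs: "y_word zs" "theta_gen w m s (X k) = (X (tr (gen_idx s) k), False) # zs"
    using theta_gen_X by blast
  let ?image = "concat (map (\<lambda>(g, b). if b then inv_word (theta_gen w m s g)
                                              else theta_gen w m s g) ys)"
  have "y_word ?image"
    using assms by (auto simp: y_word_def theta_gen_Y inv_word_def inv_letter_def)
  then have "apply_subst (theta_gen w m s) ((X k, False) # ys)
      = (X (tr (gen_idx s) k), False) # red (zs @ ?image)"
    using zs by (simp add: apply_subst_def red_Cons_X)
  with zs(1) \<open>y_word ?image\<close> show ?thesis
    by (meson y_word_append y_word_red)
qed

definition x_index :: "fvbgen list \<Rightarrow> nat \<Rightarrow> nat" where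
  "x_index ss k = foldl (\<lambda>k s. tr (gen_idx s) k) k ss"

definition y_index :: "fvbgen list \<Rightarrow> nat \<Rightarrow> nat" where
  "y_index ss k = foldl (\<lambda>k s. rho_tr s k) k ss"

lemma Theta_snoc: "Theta w m (ss @ [s]) f = apply_subst (theta_gen w m s) (Theta w m ss f)"
  by (simp add: Theta_def)

lemma Theta_X:
  "\<exists>zs. y_word zs \<and> Theta w m ss [(X k, False)] = (X (x_index ss k), False) # zs"
proof (induction ss rule: rev_induct)
  case Nil
  then show ?case by (auto simp: Theta_def x_index_def y_word_def)
next
  case (snoc s ss)
  then obtain zs where "y_word zs" "Theta w m ss [(X k, False)] = (X (x_index ss k), False) # zs"
    by blast
  then show ?case
    using apply_theta_gen_X_Cons[of zs w m s "x_index ss k"] by (simp add: Theta_snoc x_index_def)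
qed

lemma Theta_Y: "Theta w m ss [(Y k, False)] = [(Y (y_index ss k), False)]"
  by (induction ss rule: rev_induct)
    (simp_all add: Theta_def y_index_def apply_theta_gen_Y)

lemma tr_tr [simp]: "tr i (tr i k) = k"
  by (simp add: tr_def)

lemma rho_tr_rho_tr [simp]: "rho_tr s (rho_tr s k) = k"
  by (simp add: rho_tr_def split: fvbgen.split)

lemma foldl_comp_involutions_inverse:
  assumes "\<And>s k. t s (t s k) = k"
  shows "foldl (\<lambda>p s. p \<circ> t s) id ss (foldl (\<lambda>k s. t s k) k ss) = k"
proof (induction ss arbitrary: k rule: rev_induct)
  case (snoc s ss)
  then show ?case by (simp add: assms)
qed simp

lemma foldl_fixed:
  assumes "\<And>s. s \<in> set ss \<Longrightarrow> t s k = k"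
  shows "foldl (\<lambda>k s. t s k) k ss = k"
  using assms by (induction ss rule: rev_induct) auto

lemma pi_perm_x_index: "pi_perm ss (x_index ss k) = k"
  unfolding pi_perm_def x_index_def by (rule foldl_comp_involutions_inverse) simp

lemma nu_perm_eq: "nu_perm ss = foldl (\<lambda>p s. p \<circ> rho_tr s) id ss"
proof -
  have step: "(\<lambda>p s. case s of Sig i \<Rightarrow> p | Rho i \<Rightarrow> p \<circ> tr i) = (\<lambda>p s. p \<circ> rho_tr s)"
    by (intro ext) (simp add: rho_tr_def split: fvbgen.split)
  show ?thesis unfolding nu_perm_def step ..
qed

lemma nu_perm_y_index: "nu_perm ss (y_index ss k) = k"
  unfolding nu_perm_eq y_index_def by (rule foldl_comp_involutions_inverse) simp

lemma tr_out_of_range: "valid_gen n s \<Longrightarrow> k = 0 \<or> n < k \<Longrightarrow> tr (gen_idx s) k = k"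
  by (cases s) (auto simp: valid_gen_def gen_idx_def tr_def)

lemma rho_tr_out_of_range: "valid_gen n s \<Longrightarrow> k = 0 \<or> n < k \<Longrightarrow> rho_tr s k = k"
  by (cases s) (auto simp: valid_gen_def rho_tr_def tr_def)

lemma x_index_out_of_range:
  assumes "\<forall>s\<in>set ss. valid_gen n s" and "k = 0 \<or> n < k"
  shows "x_index ss k = k"
  unfolding x_index_def using assms by (intro foldl_fixed tr_out_of_range) auto

lemma y_index_out_of_range:
  assumes "\<forall>s\<in>set ss. valid_gen n s" and "k = 0 \<or> n < k"
  shows "y_index ss k = k"
  unfolding y_index_def using assms by (intro foldl_fixed rho_tr_out_of_range) auto

lemma generators_in_F2n: "1 \<le> k \<Longrightarrow> k \<le> n \<Longrightarrow> [(X k, False)] \<in> F2n n \<and> [(Y k, False)] \<in> F2n n"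
  by (auto simp: F2n_def reduced_def)

theorem lemma3p1:
  fixes n :: nat and w :: "ab letter list" and m :: "nat \<Rightarrow> int" and g :: "fvbgen list"
  assumes "n \<ge> 2"
    and "\<forall>s\<in>set g. valid_gen n s"
    and "\<forall>f\<in>F2n n. Theta w m g f = f"
  shows "pi_perm g = id \<and> nu_perm g = id"
proof -
  have indices_fixed: "x_index g k = k \<and> y_index g k = k" for k
  proof (cases "1 \<le> k \<and> k \<le> n")
    case True
    then have "Theta w m g [(X k, False)] = [(X k, False)]"
      and "Theta w m g [(Y k, False)] = [(Y k, False)]"
      using assms(3) generators_in_F2n by simp_all
    then show ?thesis using Theta_X[of w m g k] Theta_Y[of w m g k] by auto
  next
    case False
    then have "k = 0 \<or> n < k" by linarith
    then show ?thesis using assms(2) x_index_out_of_range y_index_out_of_range by simp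
  qed
  show ?thesis
    using pi_perm_x_index[of g] nu_perm_y_index[of g] indices_fixed by auto
qed

end
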